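(* Let $T_1,T_2$ be tables joined on column $J$, where $T_1$ has a real-valued column $W$. Let $0<p_1,q_1,p_2,q_2\le1$, $S_1=\mathrm{UBS}_{p_1,q_1}(T_1,J)$, $S_2=\mathrm{UBS}_{p_2,q_2}(T_2,J)$, $p_{\min}=\min\{p_1,p_2\}$, and let $F=\sum_{(t_1,t_2)\in S_1\bowtie_J S_2} t_1.W$. Then the estimator $\hat J_{\mathrm{sum}}=\frac{1}{p_{\min}q_1q_2}F$ satisfies $\mathrm{E}[\hat J_{\mathrm{sum}}]=E_{\mathrm{sum}}$, where $E_{\mathrm{sum}}=\sum_{(t_1,t_2)\in T_1\bowtie_J T_2} t_1.W$.
   Context: $T_1,T_2$ are finite multisets of tuples with a join attribute $J$ taking values in a finite set $\mathcal U$. $X\bowtie_J Y$ is the set of pairs $(t_1,t_2)\in X\times Y$ with $t_1.J=t_2.J$. $\mathrm{UBS}_{p,q}(T,J)$: given a hash function $h:\mathcal U\to[0,1]$, each tuple $t\in T$ with $h(t.J)<p$ is included independently with probability $q$; others are excluded. The values $h(v)$ are independent uniform on $[0,1]$, the same $h$ is used for both tables, and the Bernoulli coins are independent across all tuples and independent of $h$. *)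

theory Defs
  imports "HOL-Probability.Probability"
begin

text \<open>Tables are finite sets of tuple identifiers (so duplicate tuples are allowed);
  a table carries a join-key function into the finite universe 'u.\<close>

definition UBS :: "real \<Rightarrow> ('t \<Rightarrow> 'u) \<Rightarrow> 't set \<Rightarrow> ('u \<Rightarrow> real) \<Rightarrow> ('t \<Rightarrow> bool) \<Rightarrow> 't set" where
  "UBS p key T h c = {t \<in> T. h (key t) < p \<and> c t}"

definition join :: "('t1 \<Rightarrow> 'u) \<Rightarrow> ('t2 \<Rightarrow> 'u) \<Rightarrow> 't1 set \<Rightarrow> 't2 set \<Rightarrow> ('t1 \<times> 't2) set" where
  "join key1 key2 X Y = {(t1, t2). t1 \<in> X \<and> t2 \<in> Y \<and> key1 t1 = key2 t2}"

definition ubs_space :: "'t1 set \<Rightarrow> 't2 set \<Rightarrow> real \<Rightarrow> real \<Rightarrow>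
    (('u::finite \<Rightarrow> real) \<times> ('t1 \<Rightarrow> bool) \<times> ('t2 \<Rightarrow> bool)) measure" where
  "ubs_space T1 T2 q1 q2 =
     (PiM UNIV (\<lambda>_. uniform_measure lborel {0..1::real})) \<Otimes>\<^sub>M
     ((PiM T1 (\<lambda>_. measure_pmf (bernoulli_pmf q1))) \<Otimes>\<^sub>M
      (PiM T2 (\<lambda>_. measure_pmf (bernoulli_pmf q2))))"

definition J_sum_hat ::
  "('t1 \<Rightarrow> 'u) \<Rightarrow> ('t2 \<Rightarrow> 'u) \<Rightarrow> ('t1 \<Rightarrow> real) \<Rightarrow> 't1 set \<Rightarrow> 't2 set \<Rightarrow>
   real \<Rightarrow> real \<Rightarrow> real \<Rightarrow> real \<Rightarrow>
   ('u \<Rightarrow> real) \<times> ('t1 \<Rightarrow> bool) \<times> ('t2 \<Rightarrow> bool) \<Rightarrow> real" where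
  "J_sum_hat key1 key2 W T1 T2 p1 q1 p2 q2 = (\<lambda>(h, c1, c2).
     (\<Sum>(t1, t2) \<in> join key1 key2 (UBS p1 key1 T1 h c1) (UBS p2 key2 T2 h c2). W t1)
       / (min p1 p2 * q1 * q2))"

end

theory Submission
  imports Defs
begin

text \<open>Both samples use the same hash, so a pair (t1, t2) of the join survives in the
  sampled join exactly when the hash of its common key lies below min p1 p2 and both of its
  Bernoulli coins come up. The hash value and the two coins are independent, so this happens
  with probability min p1 p2 * q1 * q2; writing F as a sum of indicators over the full join,
  linearity of expectation gives the claim.\<close>

lemma measure_PiM_component:
  assumes "\<And>i. i \<in> I \<Longrightarrow> prob_space (M i)" and "i \<in> I" and "A \<in> sets (M i)"
  shows "measure (PiM I M) {x \<in> space (PiM I M). x i \<in> A} = measure (M i) A"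
proof -
  have "measure (M i) A = measure (distr (PiM I M) (M i) (\<lambda>x. x i)) A"
    using distr_PiM_component[of I M i] assms(1,2) by simp
  also have "\<dots> = measure (PiM I M) ((\<lambda>x. x i) -` A \<inter> space (PiM I M))"
    using assms(2,3) by (intro measure_distr) auto
  finally show ?thesis
    by (simp add: vimage_def Int_def conj_commute)
qed

lemma measure_pair_measure_Times:
  assumes "finite_measure M" "finite_measure N" "A \<in> sets M" "B \<in> sets N"
  shows "measure (M \<Otimes>\<^sub>M N) (A \<times> B) = measure M A * measure N B"
proof -
  interpret N: finite_measure N by fact
  show ?thesis
    using assms by (simp add: measure_def N.emeasure_pair_measure_Times enn2real_mult)
qed

lemma measure_uniform_unit_lessThan:
  assumes "0 \<le> m" "m \<le> 1"
  shows "measure (uniform_measure lborel {0..1::real}) {..<m} = m"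
proof -
  have "{0..1} \<inter> {..<m} = {0..<m}" using assms by auto
  then show ?thesis using assms by simp
qed

lemma integral_sum_indicator:
  fixes w :: "'i \<Rightarrow> real"
  assumes "finite_measure M" "finite S" "\<And>x. x \<in> S \<Longrightarrow> E x \<in> sets M"
  shows "(\<integral>\<omega>. (\<Sum>x\<in>S. w x * indicator (E x) \<omega>) \<partial>M) = (\<Sum>x\<in>S. w x * measure M (E x))"
proof -
  interpret finite_measure M by fact
  show ?thesis
    using assms(3)
    by (subst Bochner_Integration.integral_sum)
       (auto intro!: integrable_real_mult_indicator simp: sets.Int_space_eq2 less_top[symmetric])
qed

lemma finite_join: "finite X \<Longrightarrow> finite Y \<Longrightarrow> finite (join key1 key2 X Y)"
  by (auto intro: finite_subset[of _ "X \<times> Y"] simp: join_def)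

lemma join_UBS:
  "join key1 key2 (UBS p1 key1 T1 h c1) (UBS p2 key2 T2 h c2) =
     {(t1, t2) \<in> join key1 key2 T1 T2. h (key1 t1) < min p1 p2 \<and> c1 t1 \<and> c2 t2}"
  by (auto simp: join_def UBS_def)

lemma prob_space_ubs_space: "prob_space (ubs_space T1 T2 q1 q2)"
  unfolding ubs_space_def
  by (auto intro!: prob_space_pair prob_space_PiM prob_space_uniform_measure prob_space_measure_pmf)

lemma sets_ubs_space_event:
  assumes "t1 \<in> T1" "t2 \<in> T2"
  shows "{\<omega> \<in> space (ubs_space T1 T2 q1 q2). fst \<omega> k < m \<and> fst (snd \<omega>) t1 \<and> snd (snd \<omega>) t2}
           \<in> sets (ubs_space T1 T2 q1 q2)"
  unfolding ubs_space_def using assms by measurable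

lemma measure_ubs_space_event:
  fixes k :: "'u::finite"
  assumes "t1 \<in> T1" "t2 \<in> T2" "0 \<le> m" "m \<le> 1" "0 \<le> q1" "q1 \<le> 1" "0 \<le> q2" "q2 \<le> 1"
  shows "measure (ubs_space T1 T2 q1 q2)
           {\<omega> \<in> space (ubs_space T1 T2 q1 q2). fst \<omega> k < m \<and> fst (snd \<omega>) t1 \<and> snd (snd \<omega>) t2}
         = m * q1 * q2"
proof -
  define H where "H = PiM (UNIV :: 'u set) (\<lambda>_. uniform_measure lborel {0..1::real})"
  define B1 where "B1 = PiM T1 (\<lambda>_. measure_pmf (bernoulli_pmf q1))"
  define B2 where "B2 = PiM T2 (\<lambda>_. measure_pmf (bernoulli_pmf q2))"
  have prob_H: "prob_space H"
    unfolding H_def by (intro prob_space_PiM prob_space_uniform_measure) auto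
  have prob_B1: "prob_space B1" and prob_B2: "prob_space B2"
    unfolding B1_def B2_def by (auto intro!: prob_space_PiM prob_space_measure_pmf)
  define A where "A = {h \<in> space H. h k < m}"
  define C1 where "C1 = {c \<in> space B1. c t1}"
  define C2 where "C2 = {c \<in> space B2. c t2}"
  have sets: "A \<in> sets H" "C1 \<in> sets B1" "C2 \<in> sets B2"
    unfolding A_def C1_def C2_def H_def B1_def B2_def using assms(1,2) by measurable
  have "measure H A = measure (uniform_measure lborel {0..1}) {..<m}"
    using measure_PiM_component[of UNIV "\<lambda>_. uniform_measure lborel {0..1::real}" k "{..<m}"]
    unfolding A_def H_def by (simp add: prob_space_uniform_measure del: measure_uniform_measure)
  also have "\<dots> = m"
    using assms(3,4) by (rule measure_uniform_unit_lessThan)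
  finally have "measure H A = m" .
  moreover have "measure B1 C1 = q1"
    using measure_PiM_component[of T1 _ t1 "{True}"] assms(1,5,6)
    unfolding C1_def B1_def by (simp add: prob_space_measure_pmf measure_pmf_single)
  moreover have "measure B2 C2 = q2"
    using measure_PiM_component[of T2 _ t2 "{True}"] assms(2,7,8)
    unfolding C2_def B2_def by (simp add: prob_space_measure_pmf measure_pmf_single)
  moreover have "{\<omega> \<in> space (ubs_space T1 T2 q1 q2). fst \<omega> k < m \<and> fst (snd \<omega>) t1 \<and> snd (snd \<omega>) t2}
      = A \<times> (C1 \<times> C2)"
    unfolding ubs_space_def A_def C1_def C2_def H_def B1_def B2_def
    by (auto simp: space_pair_measure)
  ultimately show ?thesis
    using sets prob_H prob_B1 prob_B2
    by (simp add: ubs_space_def flip: H_def B1_def B2_def)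
       (simp add: measure_pair_measure_Times prob_space.finite_measure prob_space_pair
         pair_measureI)
qed

lemma J_sum_hat_eq_sum_if:
  assumes "finite T1" "finite T2"
  shows "J_sum_hat key1 key2 W T1 T2 p1 q1 p2 q2 (h, c1, c2) =
    (\<Sum>(t1, t2) \<in> join key1 key2 T1 T2.
       if h (key1 t1) < min p1 p2 \<and> c1 t1 \<and> c2 t2 then W t1 else 0) / (min p1 p2 * q1 * q2)"
  using finite_join[OF assms, of key1 key2]
  by (simp add: J_sum_hat_def join_UBS sum.inter_filter case_prod_unfold if_distrib)

theorem lemma4:
  fixes key1 :: "'t1 \<Rightarrow> 'u::finite" and key2 :: "'t2 \<Rightarrow> 'u"
    and W :: "'t1 \<Rightarrow> real" and T1 :: "'t1 set" and T2 :: "'t2 set"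
    and p1 q1 p2 q2 :: real
  assumes "finite T1" and "finite T2"
    and "0 < p1" "p1 \<le> 1" "0 < q1" "q1 \<le> 1"
    and "0 < p2" "p2 \<le> 1" "0 < q2" "q2 \<le> 1"
  shows "(\<integral>\<omega>. J_sum_hat key1 key2 W T1 T2 p1 q1 p2 q2 \<omega> \<partial>(ubs_space T1 T2 q1 q2))
         = (\<Sum>(t1, t2) \<in> join key1 key2 T1 T2. W t1)"
proof -
  define \<Omega> where "\<Omega> = (ubs_space T1 T2 q1 q2 :: (('u \<Rightarrow> real) \<times> _) measure)"
  define m where "m = min p1 p2"
  define E where "E = (\<lambda>(t1, t2).
    {\<omega> \<in> space \<Omega>. fst \<omega> (key1 t1) < m \<and> fst (snd \<omega>) t1 \<and> snd (snd \<omega>) t2})"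
  have "0 \<le> m" "m \<le> 1"
    using assms unfolding m_def by auto
  then have E: "E x \<in> sets \<Omega>" "measure \<Omega> (E x) = m * q1 * q2" if "x \<in> join key1 key2 T1 T2" for x
    using that assms(5,6,9,10)
    by (auto simp: E_def \<Omega>_def join_def sets_ubs_space_event measure_ubs_space_event)
  have "(\<integral>\<omega>. J_sum_hat key1 key2 W T1 T2 p1 q1 p2 q2 \<omega> \<partial>\<Omega>)
      = (\<integral>\<omega>. (\<Sum>x \<in> join key1 key2 T1 T2. W (fst x) * indicator (E x) \<omega>) / (m * q1 * q2) \<partial>\<Omega>)"
    by (intro Bochner_Integration.integral_cong)
       (auto simp: J_sum_hat_eq_sum_if assms E_def m_def case_prod_unfold intro!: sum.cong)
  also have "\<dots> = (\<Sum>x \<in> join key1 key2 T1 T2. W (fst x) * measure \<Omega> (E x)) / (m * q1 * q2)"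
    unfolding integral_divide_zero using finite_join[OF assms(1,2)] E(1)
    by (subst integral_sum_indicator)
       (auto simp: \<Omega>_def prob_space.finite_measure prob_space_ubs_space)
  also have "\<dots> = (\<Sum>(t1, t2) \<in> join key1 key2 T1 T2. W t1)"
    using assms E by (simp add: m_def sum_divide_distrib case_prod_unfold)
  finally show ?thesis unfolding \<Omega>_def .
qed

end
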